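(* Let $\alpha_1,\alpha_2,\alpha_0,\beta_0$ be nonzero real constants with $\alpha_1\beta_0^2=\alpha_2\alpha_0^2$, and consider the lattice Schwarzian KdV equation for $u_{n,m}$, $(n,m)\in\mathbb{Z}^2$: $$\mathbb{Q}\equiv\alpha_1 (u_{n,m}-u_{n,m+1}-\beta_0)(u_{n+1,m}-u_{n+1,m+1}-\beta_0)-\alpha_2 (u_{n,m}-u_{n+1,m}-\alpha_0)(u_{n,m+1}-u_{n+1,m+1}-\alpha_0)=0.$$ Then the non-autonomous generator $G_{n,m}\,\partial_{u_{n,m}}$ with $$G_{n,m}=\frac{4n(u_{n,m}-u_{n-1,m}+\alpha_0)(u_{n,m}-u_{n+1,m}-\alpha_0)}{u_{n+1,m}-u_{n-1,m}+2\alpha_0}+\frac{4m(u_{n,m}-u_{n,m-1}+\beta_0)(u_{n,m}-u_{n,m+1}-\beta_0)}{u_{n,m+1}-u_{n,m-1}+2\beta_0}$$ is a generalized symmetry of $\mathbb{Q}=0$.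
   Context: A generator $G_{n,m}\partial_{u_{n,m}}$, where $G_{n,m}$ is a function of finitely many values $u_{n+i,m+j}$ (and possibly of $n,m$), and $G_{n+i,m+j}$ denotes the same expression with all indices shifted (including the explicit factors $n$, $m$, which become $n+i$, $m+j$), is called a generalized symmetry of $\mathbb{Q}(u_{n,m},u_{n+1,m},u_{n,m+1},u_{n+1,m+1})=0$ if $$G_{n,m}\frac{\partial \mathbb{Q}}{\partial u_{n,m}}+G_{n+1,m}\frac{\partial \mathbb{Q}}{\partial u_{n+1,m}}+G_{n,m+1}\frac{\partial \mathbb{Q}}{\partial u_{n,m+1}}+G_{n+1,m+1}\frac{\partial \mathbb{Q}}{\partial u_{n+1,m+1}}=0$$ at every $(n,m)$ for every solution $u$ of the lattice equation on $\mathbb{Z}^2$ for which all denominators involved are nonzero (equivalently, the expression vanishes modulo the equation and its shifts). *)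

theory Defs
  imports "HOL-Analysis.Analysis"
begin

text \<open>The lattice Schwarzian KdV quad-equation
  Q(x, x1, x2, x12), where x = u(n,m), x1 = u(n+1,m), x2 = u(n,m+1), x12 = u(n+1,m+1).\<close>
definition QSKdV :: "real \<Rightarrow> real \<Rightarrow> real \<Rightarrow> real \<Rightarrow> real \<Rightarrow> real \<Rightarrow> real \<Rightarrow> real \<Rightarrow> real" where
  "QSKdV a1 a2 a0 b0 x x1 x2 x12 =
     a1 * (x - x2 - b0) * (x1 - x12 - b0) - a2 * (x - x1 - a0) * (x2 - x12 - a0)"

definition Gsym :: "real \<Rightarrow> real \<Rightarrow> (int \<Rightarrow> int \<Rightarrow> real) \<Rightarrow> int \<Rightarrow> int \<Rightarrow> real" where
  "Gsym a0 b0 u n m =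
     4 * of_int n * (u n m - u (n - 1) m + a0) * (u n m - u (n + 1) m - a0)
       / (u (n + 1) m - u (n - 1) m + 2 * a0)
   + 4 * of_int m * (u n m - u n (m - 1) + b0) * (u n m - u n (m + 1) - b0)
       / (u n (m + 1) - u n (m - 1) + 2 * b0)"

definition Gden_ok :: "real \<Rightarrow> real \<Rightarrow> (int \<Rightarrow> int \<Rightarrow> real) \<Rightarrow> int \<Rightarrow> int \<Rightarrow> bool" where
  "Gden_ok a0 b0 u n m \<longleftrightarrow>
     u (n + 1) m - u (n - 1) m + 2 * a0 \<noteq> 0 \<and> u n (m + 1) - u n (m - 1) + 2 * b0 \<noteq> 0"

end

theory Submission
  imports Defs
begin

text \<open>Split \<open>G = 4 n g\<^sub>1 + 4 m g\<^sub>2\<close> into its three-point parts in the two lattice directions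
  and put \<open>K = a2 (u - u\<^sub>1 - a0) (u\<^sub>2 - u\<^sub>1\<^sub>2 - a0)\<close> for the quad at \<open>(n, m)\<close>. Modulo the
  equation on this quad and on one neighbouring quad, the \<open>g\<^sub>1\<close>-terms at the two left vertices,
  weighted by the partial derivatives of \<open>Q\<close>, add up to \<open>-K\<close> and those at the two right
  vertices to \<open>K\<close>; likewise the \<open>g\<^sub>2\<close>-terms at the bottom and top vertices give \<open>K\<close> and \<open>-K\<close>.
  The symmetry condition thus reduces to \<open>4 (-n K + (n + 1) K + m K - (m + 1) K) = 0\<close>.\<close>

definition Gpart :: "real \<Rightarrow> real \<Rightarrow> real \<Rightarrow> real \<Rightarrow> real" where
  "Gpart a yl y yr = (y - yl + a) * (y - yr - a) / (yr - yl + 2 * a)"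

lemma Gsym_eq_Gpart:
  "Gsym a0 b0 u n m =
     4 * of_int n * Gpart a0 (u (n - 1) m) (u n m) (u (n + 1) m)
   + 4 * of_int m * Gpart b0 (u n (m - 1)) (u n m) (u n (m + 1))"
  unfolding Gsym_def Gpart_def by simp

lemma deriv_QSKdV_1: "deriv (\<lambda>y. QSKdV a1 a2 a0 b0 y x1 x2 x12) x = a1*(x1-x12-b0) - a2*(x2-x12-a0)"
  and deriv_QSKdV_2: "deriv (\<lambda>y. QSKdV a1 a2 a0 b0 x y x2 x12) x1 = a1*(x-x2-b0) + a2*(x2-x12-a0)"
  and deriv_QSKdV_3: "deriv (\<lambda>y. QSKdV a1 a2 a0 b0 x x1 y x12) x2 = -a1*(x1-x12-b0) - a2*(x-x1-a0)"
  and deriv_QSKdV_4: "deriv (\<lambda>y. QSKdV a1 a2 a0 b0 x x1 x2 y) x12 = -a1*(x-x2-b0) + a2*(x-x1-a0)"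
  unfolding QSKdV_def
  by (rule DERIV_imp_deriv; (rule derivative_eq_intros refl | simp add: algebra_simps)+)+

lemma add_divide_eq_iff_cross:
  fixes N N' K d d' :: "'a::field"
  assumes "d \<noteq> 0" and "d' \<noteq> 0"
  shows "N / d + N' / d' = K \<longleftrightarrow> N * d' + N' * d = K * d * d'"
  using assms by (simp add: field_simps)

lemma QSKdV_flux_left:
  assumes "QSKdV a1 a2 a0 b0 L x L2 x2 = 0" and "QSKdV a1 a2 a0 b0 x x1 x2 x12 = 0" and "a2 \<noteq> 0"
    and "x1 - L + 2*a0 \<noteq> 0" and "x12 - L2 + 2*a0 \<noteq> 0"
  shows "Gpart a0 L x x1 * (a1*(x1-x12-b0) - a2*(x2-x12-a0))
       + Gpart a0 L2 x2 x12 * (-a1*(x1-x12-b0) - a2*(x-x1-a0))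
       = - (a2*(x-x1-a0)*(x2-x12-a0))"
  unfolding Gpart_def times_divide_eq_left add_divide_eq_iff_cross[OF assms(4,5)]
  using assms(1-3) unfolding QSKdV_def by algebra

lemma QSKdV_flux_right:
  assumes "QSKdV a1 a2 a0 b0 x1 R x12 R2 = 0" and "QSKdV a1 a2 a0 b0 x x1 x2 x12 = 0" and "a2 \<noteq> 0"
    and "R - x + 2*a0 \<noteq> 0" and "R2 - x2 + 2*a0 \<noteq> 0"
  shows "Gpart a0 x x1 R * (a1*(x-x2-b0) + a2*(x2-x12-a0))
       + Gpart a0 x2 x12 R2 * (-a1*(x-x2-b0) + a2*(x-x1-a0))
       = a2*(x-x1-a0)*(x2-x12-a0)"
  unfolding Gpart_def times_divide_eq_left add_divide_eq_iff_cross[OF assms(4,5)]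
  using assms(1-3) unfolding QSKdV_def by algebra

lemma QSKdV_flux_below:
  assumes "QSKdV a1 a2 a0 b0 B B1 x x1 = 0" and "QSKdV a1 a2 a0 b0 x x1 x2 x12 = 0" and "a1 \<noteq> 0"
    and "x2 - B + 2*b0 \<noteq> 0" and "x12 - B1 + 2*b0 \<noteq> 0"
  shows "Gpart b0 B x x2 * (a1*(x1-x12-b0) - a2*(x2-x12-a0))
       + Gpart b0 B1 x1 x12 * (a1*(x-x2-b0) + a2*(x2-x12-a0))
       = a2*(x-x1-a0)*(x2-x12-a0)"
  unfolding Gpart_def times_divide_eq_left add_divide_eq_iff_cross[OF assms(4,5)]
  using assms(1-3) unfolding QSKdV_def by algebra

lemma QSKdV_flux_above:
  assumes "QSKdV a1 a2 a0 b0 x2 x12 T T1 = 0" and "QSKdV a1 a2 a0 b0 x x1 x2 x12 = 0" and "a1 \<noteq> 0"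
    and "T - x + 2*b0 \<noteq> 0" and "T1 - x1 + 2*b0 \<noteq> 0"
  shows "Gpart b0 x x2 T * (-a1*(x1-x12-b0) - a2*(x-x1-a0))
       + Gpart b0 x1 x12 T1 * (-a1*(x-x2-b0) + a2*(x-x1-a0))
       = - (a2*(x-x1-a0)*(x2-x12-a0))"
  unfolding Gpart_def times_divide_eq_left add_divide_eq_iff_cross[OF assms(4,5)]
  using assms(1-3) unfolding QSKdV_def by algebra

lemma weighted_flux_sum_eq_0:
  fixes n m g0 g1 g2 g3 h0 h1 h2 h3 Q0 Q1 Q2 Q3 K :: "'a::idom"
  assumes "g0*Q0 + g2*Q2 = -K" and "g1*Q1 + g3*Q3 = K"
    and "h0*Q0 + h1*Q1 = K" and "h2*Q2 + h3*Q3 = -K"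
  shows "(4*n*g0 + 4*m*h0)*Q0 + (4*(n+1)*g1 + 4*m*h1)*Q1
       + (4*n*g2 + 4*(m+1)*h2)*Q2 + (4*(n+1)*g3 + 4*(m+1)*h3)*Q3 = 0"
  using assms by algebra

theorem mainTheorem4:
  fixes a1 a2 a0 b0 :: real and u :: "int \<Rightarrow> int \<Rightarrow> real" and n m :: int
  assumes "a1 \<noteq> 0" and "a2 \<noteq> 0" and "a0 \<noteq> 0" and "b0 \<noteq> 0"
    and "a1 * b0^2 = a2 * a0^2"
    and sol: "\<forall>k l. QSKdV a1 a2 a0 b0 (u k l) (u (k + 1) l) (u k (l + 1)) (u (k + 1) (l + 1)) = 0"
    and "Gden_ok a0 b0 u n m" and "Gden_ok a0 b0 u (n + 1) m"
    and "Gden_ok a0 b0 u n (m + 1)" and "Gden_ok a0 b0 u (n + 1) (m + 1)"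
  shows "Gsym a0 b0 u n m
           * deriv (\<lambda>x. QSKdV a1 a2 a0 b0 x (u (n + 1) m) (u n (m + 1)) (u (n + 1) (m + 1))) (u n m)
       + Gsym a0 b0 u (n + 1) m
           * deriv (\<lambda>x. QSKdV a1 a2 a0 b0 (u n m) x (u n (m + 1)) (u (n + 1) (m + 1))) (u (n + 1) m)
       + Gsym a0 b0 u n (m + 1)
           * deriv (\<lambda>x. QSKdV a1 a2 a0 b0 (u n m) (u (n + 1) m) x (u (n + 1) (m + 1))) (u n (m + 1))
       + Gsym a0 b0 u (n + 1) (m + 1)
           * deriv (\<lambda>x. QSKdV a1 a2 a0 b0 (u n m) (u (n + 1) m) (u n (m + 1)) x) (u (n + 1) (m + 1))
       = 0"
proof -
  have Q: "QSKdV a1 a2 a0 b0 (u k l) (u (k + 1) l) (u k (l + 1)) (u (k + 1) (l + 1)) = 0" for k l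
    using sol by blast
  note den = assms(7-10)[unfolded Gden_ok_def add_diff_cancel_right']
  note left = QSKdV_flux_left[OF Q[of "n - 1" m, simplified] Q[of n m] \<open>a2 \<noteq> 0\<close>]
  note right = QSKdV_flux_right[OF Q[of "n + 1" m] Q[of n m] \<open>a2 \<noteq> 0\<close>]
  note below = QSKdV_flux_below[OF Q[of n "m - 1", simplified] Q[of n m] \<open>a1 \<noteq> 0\<close>]
  note above = QSKdV_flux_above[OF Q[of n "m + 1"] Q[of n m] \<open>a1 \<noteq> 0\<close>]
  show ?thesis
    unfolding Gsym_eq_Gpart deriv_QSKdV_1 deriv_QSKdV_2 deriv_QSKdV_3 deriv_QSKdV_4
      of_int_add of_int_1 add_diff_cancel_right'
    by (rule weighted_flux_sum_eq_0[OF left right below above]) (use den in blast)+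
qed

end
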